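(* Let $n\ge2$ and let $c_1,c_2\ge 0$ satisfy $c_1-3c_2-3\ge0$, $c_2+1\ge 2n$ and $c_1\ge 3c_2+3+(c_2+1)^2$. Let $\mathcal{A}=(a_{i_1i_2i_3})$ be the third order $n$-dimensional tensor with $a_{i_1i_2i_3}=c_1$ if $i_1=i_2=i_3$; $a_{i_1i_2i_3}=c_2$ if not all indices are equal but at least two of them are equal; and $a_{i_1i_2i_3}=-1$ if $i_1,i_2,i_3$ are pairwise distinct. Then $\mathcal{A}$ is a strongly SOS tensor. In particular (when $n\ge3$, so that $\mathcal{A}$ has entries equal to $-1$), a strongly SOS tensor may have negative entries.
   Context: For a symmetric third order $n$-dimensional tensor $\mathcal{A}$ and $\mathbf{x}\in\mathbb{R}^n$, let $F_i(\mathbf{x})=\sum_{i_2,i_3=1}^n a_{ii_2i_3}x_{i_2}x_{i_3}$. $\mathcal{A}$ is a strongly SOS tensor if each $F_i$, $i=1,\dots,n$, is a sum of squares of real polynomials. *)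

theory Defs
  imports "HOL-Analysis.Analysis"
begin

text \<open>Real polynomial functions on R^n (n = CARD('n)); over the reals these are exactly
  the functions induced by real polynomials in the n coordinates.\<close>
inductive_set poly_fun :: "(real ^ 'n \<Rightarrow> real) set" where
  pf_const: "(\<lambda>x. c) \<in> poly_fun"
| pf_var: "(\<lambda>x. x $ i) \<in> poly_fun"
| pf_add: "p \<in> poly_fun \<Longrightarrow> q \<in> poly_fun \<Longrightarrow> (\<lambda>x. p x + q x) \<in> poly_fun"
| pf_mult: "p \<in> poly_fun \<Longrightarrow> q \<in> poly_fun \<Longrightarrow> (\<lambda>x. p x * q x) \<in> poly_fun"

definition is_SOS :: "(real ^ 'n \<Rightarrow> real) \<Rightarrow> bool" where
  "is_SOS f \<longleftrightarrow> (\<exists>ps. (\<forall>p\<in>set ps. p \<in> poly_fun) \<and> (\<forall>x. f x = (\<Sum>p\<leftarrow>ps. (p x)^2)))"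

definition symmetric_tensor3 :: "('n \<Rightarrow> 'n \<Rightarrow> 'n \<Rightarrow> real) \<Rightarrow> bool" where
  "symmetric_tensor3 A \<longleftrightarrow> (\<forall>i j k. A i j k = A j i k \<and> A i j k = A i k j)"

definition tensor_F :: "('n::finite \<Rightarrow> 'n \<Rightarrow> 'n \<Rightarrow> real) \<Rightarrow> 'n \<Rightarrow> real ^ 'n \<Rightarrow> real" where
  "tensor_F A i x = (\<Sum>j\<in>UNIV. \<Sum>k\<in>UNIV. A i j k * x $ j * x $ k)"

definition strongly_SOS :: "('n::finite \<Rightarrow> 'n \<Rightarrow> 'n \<Rightarrow> real) \<Rightarrow> bool" where
  "strongly_SOS A \<longleftrightarrow> symmetric_tensor3 A \<and> (\<forall>i. is_SOS (tensor_F A i))"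

end

theory Submission
  imports Defs
begin

text \<open>Split off the coordinate \<open>x\<^sub>i\<close> and let \<open>S\<close> and \<open>Q\<close> be the sum and the sum of squares of
  the other \<open>m = n - 1\<close> coordinates; then \<open>F\<^sub>i(x) = c\<^sub>1 x\<^sub>i\<^sup>2 + 2 c\<^sub>2 x\<^sub>i S + (c\<^sub>2 + 1) Q - S\<^sup>2\<close>.
  The variance identity \<open>Q - S\<^sup>2/m = \<Sum>\<^sub>j (x\<^sub>j - S/m)\<^sup>2\<close> rewrites
  \<open>(c\<^sub>2 + 1) Q - S\<^sup>2\<close> as \<open>(c\<^sub>2 + 1) \<Sum>\<^sub>j (x\<^sub>j - S/m)\<^sup>2 + d S\<^sup>2\<close> with \<open>d = (c\<^sub>2 + 1)/m - 1 \<ge> 1\<close>,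
  and completing the square in \<open>S\<close> leaves the coefficient \<open>c\<^sub>1 - c\<^sub>2\<^sup>2/d \<ge> 0\<close> in front of \<open>x\<^sub>i\<^sup>2\<close>.
  So every \<open>F\<^sub>i\<close> is a sum of squares of linear forms, whatever the sign of the off-diagonal entries.\<close>

lemma poly_fun_sum: "(\<And>j. j \<in> J \<Longrightarrow> g j \<in> poly_fun) \<Longrightarrow> (\<lambda>x. \<Sum>j\<in>J. g j x) \<in> poly_fun"
  by (induction J rule: infinite_finite_induct) (simp_all add: pf_const pf_add)

lemma poly_fun_cmult: "p \<in> poly_fun \<Longrightarrow> (\<lambda>x. c * p x) \<in> poly_fun"
  using pf_mult[OF pf_const] by blast

lemma poly_fun_diff: "p \<in> poly_fun \<Longrightarrow> q \<in> poly_fun \<Longrightarrow> (\<lambda>x. p x - q x) \<in> poly_fun"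
  using pf_add[OF _ poly_fun_cmult[of q "-1"]] by simp

lemma is_SOS_zero: "is_SOS (\<lambda>x. 0)"
  unfolding is_SOS_def by (intro exI[of _ "[]"]) simp

lemma is_SOS_power2: "p \<in> poly_fun \<Longrightarrow> is_SOS (\<lambda>x. (p x)^2)"
  unfolding is_SOS_def by (intro exI[of _ "[p]"]) simp

lemma is_SOS_add:
  assumes "is_SOS f" and "is_SOS g"
  shows "is_SOS (\<lambda>x. f x + g x)"
proof -
  obtain ps where "\<forall>p\<in>set ps. p \<in> poly_fun" "\<And>x. f x = (\<Sum>p\<leftarrow>ps. (p x)^2)"
    using assms(1) unfolding is_SOS_def by blast
  moreover obtain qs where "\<forall>q\<in>set qs. q \<in> poly_fun" "\<And>x. g x = (\<Sum>q\<leftarrow>qs. (q x)^2)"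
    using assms(2) unfolding is_SOS_def by blast
  ultimately show ?thesis
    unfolding is_SOS_def by (intro exI[of _ "ps @ qs"]) auto
qed

lemma is_SOS_cmult:
  assumes "c \<ge> 0" and "is_SOS f"
  shows "is_SOS (\<lambda>x. c * f x)"
proof -
  obtain ps where ps: "\<forall>p\<in>set ps. p \<in> poly_fun" "\<And>x. f x = (\<Sum>p\<leftarrow>ps. (p x)^2)"
    using assms(2) unfolding is_SOS_def by blast
  have "c * f x = (\<Sum>p\<leftarrow>map (\<lambda>p x. sqrt c * p x) ps. (p x)^2)" for x
    using assms(1) by (simp add: ps(2) o_def power_mult_distrib sum_list_const_mult)
  moreover have "\<forall>p\<in>set (map (\<lambda>p x. sqrt c * p x) ps). p \<in> poly_fun"
    using ps(1) by (auto intro: poly_fun_cmult)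
  ultimately show ?thesis
    unfolding is_SOS_def by blast
qed

lemma is_SOS_sum: "(\<And>j. j \<in> J \<Longrightarrow> is_SOS (f j)) \<Longrightarrow> is_SOS (\<lambda>x. \<Sum>j\<in>J. f j x)"
  by (induction J rule: infinite_finite_induct) (simp_all add: is_SOS_zero is_SOS_add)

lemma sum_power2_deviation_mean:
  fixes f :: "'a \<Rightarrow> real"
  assumes "finite U" and "U \<noteq> {}"
  shows "(\<Sum>j\<in>U. (f j - sum f U / card U)^2) = (\<Sum>j\<in>U. (f j)^2) - (sum f U)^2 / card U"
proof -
  let ?m = "real (card U)" and ?S = "sum f U"
  have m: "?m > 0"
    using assms by (simp add: card_gt_0_iff)
  have "(\<Sum>j\<in>U. (f j - ?S / ?m)^2) = (\<Sum>j\<in>U. (f j)^2 - 2 * (?S / ?m) * f j + (?S / ?m)^2)"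
    by (intro sum.cong refl) (simp add: power2_eq_square algebra_simps)
  also have "\<dots> = (\<Sum>j\<in>U. (f j)^2) - 2 * (?S / ?m) * ?S + ?m * (?S / ?m)^2"
    by (simp add: sum.distrib sum_subtractf sum_distrib_left)
  also have "\<dots> = (\<Sum>j\<in>U. (f j)^2) - ?S^2 / ?m"
    using m by (simp add: field_simps power2_eq_square)
  finally show ?thesis .
qed

definition three_level_tensor :: "real \<Rightarrow> real \<Rightarrow> real \<Rightarrow> 'n \<Rightarrow> 'n \<Rightarrow> 'n \<Rightarrow> real" where
  "three_level_tensor a b c i j k =
     (if i = j \<and> j = k then a else if i \<noteq> j \<and> j \<noteq> k \<and> i \<noteq> k then c else b)"

lemma symmetric_three_level_tensor: "symmetric_tensor3 (three_level_tensor a b c)"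
  unfolding symmetric_tensor3_def three_level_tensor_def by auto

lemma tensor_F_three_level_tensor:
  fixes x :: "real ^ 'n::finite"
  defines "T \<equiv> \<Sum>j\<in>UNIV. x $ j"
  shows "tensor_F (three_level_tensor a b c) i x =
     c * T^2 + (b - c) * (2 * x $ i * T + (\<Sum>j\<in>UNIV. (x $ j)^2)) + (a - 3 * b + 2 * c) * (x $ i)^2"
proof -
  \<comment> \<open>The entry \<open>a\<^sub>i\<^sub>j\<^sub>k\<close> is \<open>c + (b - c)(\<delta>\<^sub>i\<^sub>j + \<delta>\<^sub>j\<^sub>k + \<delta>\<^sub>i\<^sub>k) + (a - 3b + 2c) \<delta>\<^sub>i\<^sub>j\<^sub>k\<close>.\<close>
  define g :: "'n \<Rightarrow> 'n \<Rightarrow> real" where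
    "g j k = (if k = i then x $ j * x $ i else 0) + (if k = j then (x $ j)^2 else 0)
               + (if j = i then x $ i * x $ k else 0)" for j k
  define h :: "'n \<Rightarrow> 'n \<Rightarrow> real" where
    "h j k = (if k = i then if j = i then (x $ i)^2 else 0 else 0)" for j k
  have entry: "three_level_tensor a b c i j k * x $ j * x $ k =
      c * (x $ j * x $ k) + (b - c) * g j k + (a - 3 * b + 2 * c) * h j k" for j k
    by (auto simp: three_level_tensor_def g_def h_def power2_eq_square algebra_simps)
  have "(\<Sum>j\<in>UNIV. \<Sum>k\<in>UNIV. x $ j * x $ k) = T^2"
    by (simp add: T_def power2_eq_square sum_product)
  moreover have "(\<Sum>j\<in>UNIV. \<Sum>k\<in>UNIV. g j k) = 2 * x $ i * T + (\<Sum>j\<in>UNIV. (x $ j)^2)"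
  proof -
    have row: "(\<Sum>j\<in>UNIV. x $ j * x $ i) = x $ i * T"
      by (simp add: T_def sum_distrib_left mult.commute)
    have col: "(\<Sum>j\<in>UNIV. \<Sum>k\<in>UNIV. if j = i then x $ i * x $ k else 0) = x $ i * T"
      by (subst sum.swap) (simp add: T_def sum_distrib_left)
    show ?thesis
      by (simp add: g_def sum.distrib row col)
  qed
  moreover have "(\<Sum>j\<in>UNIV. \<Sum>k\<in>UNIV. h j k) = (x $ i)^2"
    by (simp add: h_def)
  ultimately show ?thesis
    unfolding tensor_F_def entry
    by (simp add: sum.distrib sum_distrib_left[symmetric])
qed

lemma tensor_F_three_level_tensor_split:
  fixes x :: "real ^ 'n::finite" and i :: 'n
  defines "S \<equiv> \<Sum>j\<in>UNIV - {i}. x $ j"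
  shows "tensor_F (three_level_tensor a b c) i x =
     a * (x $ i)^2 + 2 * b * x $ i * S + (b - c) * (\<Sum>j\<in>UNIV - {i}. (x $ j)^2) + c * S^2"
proof -
  have split: "(\<Sum>j\<in>UNIV. f j) = f i + (\<Sum>j\<in>UNIV - {i}. f j)" for f :: "'n \<Rightarrow> real"
    by (simp add: sum.remove)
  show ?thesis
    unfolding tensor_F_three_level_tensor split[of "\<lambda>j. x $ j"] split[of "\<lambda>j. (x $ j)^2"] S_def
    by (simp add: power2_eq_square algebra_simps)
qed

lemma is_SOS_tensor_F_three_level_tensor:
  fixes a b c :: real and i :: "'n::finite"
  defines "d \<equiv> (b - c) / (real CARD('n) - 1) + c"
  assumes n2: "CARD('n) \<ge> 2" and c_le_b: "c \<le> b" and d_pos: "d > 0" and b_a_d: "b^2 \<le> a * d"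
  shows "is_SOS (tensor_F (three_level_tensor a b c) i)"
proof -
  define U where "U = UNIV - {i}"
  define m where "m = real (card U)"
  have m: "m = real CARD('n) - 1" "m \<ge> 1"
    using n2 by (simp_all add: m_def U_def card_Diff_singleton of_nat_diff)
  have d_m: "d = (b - c) / m + c"
    unfolding d_def m(1) ..
  define S where "S x = (\<Sum>j\<in>U. x $ j)" for x :: "real ^ 'n"
  have square_completion: "d * (s + b / d * t)^2 + (a - b^2 / d) * t^2 + (b - c) * (q - s^2 / m)
      = a * t^2 + 2 * b * t * s + (b - c) * q + c * s^2" for s t q
  proof -
    have "d * (s + b / d * t)^2 = d * s^2 + 2 * b * t * s + b^2 / d * t^2"
      using d_pos by (simp add: power2_eq_square field_simps)
    moreover have "(b - c) * (q - s^2 / m) = (b - c) * q - (d - c) * s^2"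
      using m(2) by (simp add: d_m field_simps)
    ultimately show ?thesis
      by (simp add: algebra_simps)
  qed
  have decomp: "tensor_F (three_level_tensor a b c) i x =
      d * (S x + b / d * x $ i)^2 + (a - b^2 / d) * (x $ i)^2
      + (b - c) * (\<Sum>j\<in>U. (x $ j - S x / m)^2)" for x
  proof -
    have "U \<noteq> {}"
      using m(2) by (auto simp: m_def)
    then have deviation: "(\<Sum>j\<in>U. (x $ j)^2) - (S x)^2 / m = (\<Sum>j\<in>U. (x $ j - S x / m)^2)"
      using sum_power2_deviation_mean[of U "\<lambda>j. x $ j"] by (simp add: S_def m_def)
    have "tensor_F (three_level_tensor a b c) i x
        = a * (x $ i)^2 + 2 * b * x $ i * S x + (b - c) * (\<Sum>j\<in>U. (x $ j)^2) + c * (S x)^2"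
      by (simp add: tensor_F_three_level_tensor_split S_def U_def)
    also have "\<dots> = d * (S x + b / d * x $ i)^2 + (a - b^2 / d) * (x $ i)^2
        + (b - c) * ((\<Sum>j\<in>U. (x $ j)^2) - (S x)^2 / m)"
      by (rule square_completion[symmetric])
    finally show ?thesis
      unfolding deviation .
  qed
  have "is_SOS (\<lambda>x. d * (S x + b / d * x $ i)^2 + (a - b^2 / d) * (x $ i)^2
      + (b - c) * (\<Sum>j\<in>U. (x $ j - S x / m)^2))"
  proof -
    have S: "S \<in> poly_fun"
      unfolding S_def by (intro poly_fun_sum pf_var)
    have mean: "(\<lambda>x. S x / m) \<in> poly_fun"
      using poly_fun_cmult[OF S, of "1 / m"] by simp
    have "a - b^2 / d \<ge> 0"
      using b_a_d d_pos by (simp add: field_simps)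
    then show ?thesis
      using d_pos c_le_b
      by (intro is_SOS_add is_SOS_cmult is_SOS_sum is_SOS_power2 poly_fun_diff pf_add
          poly_fun_cmult pf_var S mean) auto
  qed
  then show ?thesis
    unfolding decomp[abs_def] .
qed

theorem corollary4p3:
  fixes c1 c2 :: real and A :: "'n::finite \<Rightarrow> 'n \<Rightarrow> 'n \<Rightarrow> real"
  assumes n2: "CARD('n) \<ge> 2"
    and c1: "c1 \<ge> 0" and c2: "c2 \<ge> 0"
    and h1: "c1 - 3 * c2 - 3 \<ge> 0"
    and h2: "c2 + 1 \<ge> 2 * real CARD('n)"
    and h3: "c1 \<ge> 3 * c2 + 3 + (c2 + 1)^2"
    and A_def: "\<And>i j k. A i j k =
       (if i = j \<and> j = k then c1
        else if i \<noteq> j \<and> j \<noteq> k \<and> i \<noteq> k then -1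
        else c2)"
  shows "strongly_SOS A \<and> (CARD('n) \<ge> 3 \<longrightarrow> (\<exists>i j k. A i j k < 0))"
proof
  have A: "A = three_level_tensor c1 c2 (-1)"
    by (intro ext) (simp add: A_def three_level_tensor_def)
  define d where "d = (c2 + 1) / (real CARD('n) - 1) - 1"
  have "d \<ge> 1"
    using n2 h2 by (simp add: d_def field_simps)
  moreover have "c2^2 \<le> c1"
    using h3 c2 by (smt (verit) power_mono)
  ultimately have "c2^2 \<le> c1 * d"
    using c1 by (smt (verit) mult_left_mono mult_cancel_left1)
  moreover have "d > 0"
    using \<open>d \<ge> 1\<close> by simp
  moreover have "(c2 - -1) / (real CARD('n) - 1) + -1 = d"
    by (simp add: d_def)
  ultimately have "is_SOS (tensor_F A i)" for i :: 'n
    unfolding A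
    using is_SOS_tensor_F_three_level_tensor[where a = c1 and b = c2 and c = "-1" and i = i] n2 c2
    by simp
  then show "strongly_SOS A"
    by (simp add: strongly_SOS_def A symmetric_three_level_tensor)
next
  show "CARD('n) \<ge> 3 \<longrightarrow> (\<exists>i j k. A i j k < 0)"
  proof
    assume "CARD('n) \<ge> 3"
    then obtain T :: "'n set" where "card T = 3"
      by (metis obtain_subset_with_card_n)
    then obtain i j k :: 'n where "i \<noteq> j" "j \<noteq> k" "i \<noteq> k"
      unfolding card_3_iff by blast
    then show "\<exists>i j k. A i j k < 0"
      by (auto simp: A_def)
  qed
qed

end
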